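(* Let $(\Omega,\rho)$ be a metric space, let $\mathcal P$ be the set of all Borel probability measures on $\Omega$, let $r\in[1,\infty)$ and let $n\ge1$ be an integer. Then \[ \inf_{\hat P}\ \sup_{P\in\mathcal P}\ \mathbb E_{X_1,\dots,X_n\overset{iid}{\sim}P}\Big[W_r^r\big(P,\hat P(X_1,\dots,X_n)\big)\Big]\;\ge\; c_r\sup_{k\in\{2,\dots,32n\}}R^r(k)\sqrt{\frac{k-1}{n}},\qquad c_r=\frac{3\log 2}{2^{r+12}}, \] where the infimum is over all estimators, i.e. all (possibly randomized) maps $\hat P:\Omega^n\to\mathcal P$. (If the right-hand side is $+\infty$, the claim is that the left-hand side is $+\infty$.)
   Context: For Borel probability measures $P,Q$ on $(\Omega,\rho)$ and $r\ge1$, $W_r(P,Q):=\inf_{\mu\in\Pi(P,Q)}\big(\mathbb E_{(X,Y)\sim\mu}[\rho^r(X,Y)]\big)^{1/r}$, with $\Pi(P,Q)$ the set of couplings (probability measures on $\Omega\times\Omega$ with marginals $P,Q$). For $S\subseteq\Omega$, the separation is $\mathrm{Sep}(S):=\inf_{x\ne y\in S}\rho(x,y)$. The packing radius is $R(k):=\sup\{\mathrm{Sep}(S): S\subseteq\Omega,\ |S|\ge k\}\in[0,\infty]$, with the convention $R(k)=0$ if $\Omega$ has fewer than $k$ points. *)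

theory Defs
  imports "HOL-Probability.Probability"
begin

definition borel_prob_measures :: "('a::metric_space) measure set" where
  "borel_prob_measures = {M. sets M = sets borel \<and> prob_space M}"

definition couplings :: "('a::metric_space) measure \<Rightarrow> 'a measure \<Rightarrow> ('a \<times> 'a) measure set" where
  "couplings P Q = {\<mu>. sets \<mu> = sets borel \<and> prob_space \<mu> \<and>
                       distr \<mu> borel fst = P \<and> distr \<mu> borel snd = Q}"

definition wasserstein_pow :: "real \<Rightarrow> ('a::metric_space) measure \<Rightarrow> 'a measure \<Rightarrow> ennreal" where
  "wasserstein_pow r P Q =
     (INF \<mu> \<in> couplings P Q. \<integral>\<^sup>+ z. ennreal (dist (fst z) (snd z) powr r) \<partial>\<mu>)"

definition sep :: "('a::metric_space) set \<Rightarrow> ennreal" where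
  "sep S = (INF p \<in> {(x, y). x \<in> S \<and> y \<in> S \<and> x \<noteq> y}. ennreal (dist (fst p) (snd p)))"

text \<open>Packing radius R(k) = sup of Sep(S) over S with |S| \<ge> k (infinite S allowed);
  equals 0 (the empty supremum) if there are fewer than k points.\<close>
definition packing_radius :: "('a::metric_space) itself \<Rightarrow> nat \<Rightarrow> ennreal" where
  "packing_radius _ k = (SUP S \<in> {S :: 'a set. infinite S \<or> card S \<ge> k}. sep S)"

definition ennreal_powr :: "ennreal \<Rightarrow> real \<Rightarrow> ennreal" where
  "ennreal_powr x r = (if x = \<infinity> then \<infinity> else ennreal (enn2real x powr r))"

text \<open>Randomized estimators: an auxiliary probability space U of randomness and a map
  from samples (x_0,...,x_{n-1}) and randomness u to Borel probability measures,
  such that the loss W_r^r(P, Phat X u) is a measurable function of (X,u) for every P.\<close>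
definition estimators :: "nat \<Rightarrow> real \<Rightarrow>
    ('u measure \<times> ((nat \<Rightarrow> 'a::metric_space) \<Rightarrow> 'u \<Rightarrow> 'a measure)) set" where
  "estimators n r = {(U, Phat). prob_space U \<and>
      (\<forall>xs \<in> space (PiM {..<n} (\<lambda>_. borel)). \<forall>u \<in> space U. Phat xs u \<in> borel_prob_measures) \<and>
      (\<forall>P \<in> borel_prob_measures.
         (\<lambda>z. wasserstein_pow r P (Phat (fst z) (snd z)))
           \<in> borel_measurable (PiM {..<n} (\<lambda>_. borel) \<Otimes>\<^sub>M U))}"

definition risk :: "nat \<Rightarrow> real \<Rightarrow> 'u measure \<Rightarrow> ((nat \<Rightarrow> 'a::metric_space) \<Rightarrow> 'u \<Rightarrow> 'a measure)
    \<Rightarrow> 'a measure \<Rightarrow> ennreal" where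
  "risk n r U Phat P =
     (\<integral>\<^sup>+ z. wasserstein_pow r P (Phat (fst z) (snd z)) \<partial>(PiM {..<n} (\<lambda>_. P) \<Otimes>\<^sub>M U))"

end

theory Submission
  imports Defs
begin

text \<open>Assouad's method. Given \<open>k\<close> points at mutual distance \<open>\<ge> \<delta>\<close>, group \<open>2m \<le> k\<close> of them into
  \<open>m\<close> pairs and, for every \<open>\<sigma> \<in> {0,1}\<^sup>m\<close>, let \<open>P\<^sub>\<sigma>\<close> give the two points of pair \<open>j\<close> the masses
  \<open>(1 \<plusminus> \<epsilon>)/(2m)\<close>, the sign chosen by \<open>\<sigma> j\<close>. Moving mass off an atom costs at least \<open>(\<delta>/2)\<^sup>r\<close>
  per unit, so an estimate \<open>Q\<close> can be close to at most one of two neighbours \<open>P\<^sub>\<sigma>\<close>, \<open>P\<^sub>\<sigma>\<^sub>'\<close> that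
  differ in one coordinate: their combined loss on pair \<open>j\<close> is \<open>\<ge> (\<delta>/2)\<^sup>r \<epsilon>/m\<close>. With
  \<open>\<epsilon>\<^sup>2 = m/(16n)\<close> the Bhattacharyya affinity of neighbours is \<open>\<ge> 1 - \<epsilon>\<^sup>2/m\<close> per sample, so the
  laws of their \<open>n\<close>-samples overlap by at least \<open>7/16\<close>, and no estimator can tell them apart.
  Averaging over the hypercube gives a risk \<open>\<ge> (7/64)(\<delta>/2)\<^sup>r \<epsilon>\<close>, and \<open>\<delta>\<close> may be taken
  arbitrarily close to the packing radius \<open>R(k)\<close>.\<close>

definition assouad_weight :: "real \<Rightarrow> nat \<Rightarrow> (nat \<Rightarrow> bool) \<Rightarrow> nat \<Rightarrow> real" where
  "assouad_weight \<epsilon> m \<sigma> i = (1 + (if \<sigma> (i div 2) = even i then \<epsilon> else - \<epsilon>)) / (2 * real m)"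

definition flip_coord :: "nat \<Rightarrow> (nat \<Rightarrow> bool) \<Rightarrow> nat \<Rightarrow> bool" where
  "flip_coord j \<sigma> = \<sigma>(j := \<not> \<sigma> j)"

lemma sum_lessThan_double:
  "(\<Sum>i<2 * (m::nat). f i) = (\<Sum>j<m. f (2 * j) + f (2 * j + 1) :: 'b::comm_monoid_add)"
proof (induction m)
  case (Suc m)
  have "{..<2 * Suc m} = insert (2 * m + 1) (insert (2 * m) {..<2 * m})" by auto
  then show ?case using Suc by (simp add: add_ac)
qed simp

lemma assouad_weight_pair:
  "m > 0 \<Longrightarrow> assouad_weight \<epsilon> m \<sigma> (2 * j) + assouad_weight \<epsilon> m \<sigma> (2 * j + 1) = 1 / real m"
  unfolding assouad_weight_def by (auto simp: field_simps)

lemma assouad_weight_sum: "m > 0 \<Longrightarrow> (\<Sum>i<2 * m. assouad_weight \<epsilon> m \<sigma> i) = 1"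
  using assouad_weight_pair[of m \<epsilon> \<sigma>] by (simp add: sum_lessThan_double)

lemma assouad_weight_nonneg: "\<bar>\<epsilon>\<bar> \<le> 1 \<Longrightarrow> 0 \<le> assouad_weight \<epsilon> m \<sigma> i"
  unfolding assouad_weight_def by (auto intro!: divide_nonneg_nonneg)

lemma assouad_weight_flip_coord_diff:
  "m > 0 \<Longrightarrow> 0 \<le> \<epsilon> \<Longrightarrow>
    \<bar>assouad_weight \<epsilon> m \<sigma> (2 * j) - assouad_weight \<epsilon> m (flip_coord j \<sigma>) (2 * j)\<bar> = \<epsilon> / m"
  unfolding assouad_weight_def flip_coord_def by (auto simp: field_simps)

lemma flip_coord_flip_coord [simp]: "flip_coord j (flip_coord j \<sigma>) = \<sigma>"
  unfolding flip_coord_def by auto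

lemma flip_coord_in_PiE:
  "j < m \<Longrightarrow> \<sigma> \<in> PiE {..<m} (\<lambda>_. UNIV) \<Longrightarrow> flip_coord j \<sigma> \<in> PiE {..<m} (\<lambda>_. UNIV)"
  unfolding flip_coord_def by (auto simp: PiE_def extensional_def)

lemma sum_flip_coord:
  assumes "j < m"
  shows "(\<Sum>\<sigma>\<in>PiE {..<m} (\<lambda>_. UNIV). g (flip_coord j \<sigma>)) = (\<Sum>\<sigma>\<in>PiE {..<m} (\<lambda>_. UNIV). g \<sigma>)"
  by (rule sum.reindex_bij_witness[where i="flip_coord j" and j="flip_coord j"])
     (auto simp: flip_coord_in_PiE assms)

lemma sum_min_flip_coord_le_pair_loss:
  assumes "j < m" "m > 0" "0 \<le> \<epsilon>" "\<And>\<sigma>. 0 \<le> \<pi> \<sigma>"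
  shows "(\<epsilon> / (2 * m)) * (\<Sum>\<sigma>\<in>PiE {..<m} (\<lambda>_. UNIV). min (\<pi> \<sigma>) (\<pi> (flip_coord j \<sigma>)))
     \<le> (\<Sum>\<sigma>\<in>PiE {..<m} (\<lambda>_. UNIV). \<pi> \<sigma> * \<bar>assouad_weight \<epsilon> m \<sigma> (2 * j) - q\<bar>)"
proof -
  let ?C = "PiE {..<m} (\<lambda>_. UNIV :: bool set)"
  let ?c = "\<lambda>\<sigma>. \<bar>assouad_weight \<epsilon> m \<sigma> (2 * j) - q\<bar>"
  let ?\<sigma>' = "\<lambda>\<sigma>. flip_coord j \<sigma>"
  have pointwise: "min (\<pi> \<sigma>) (\<pi> (?\<sigma>' \<sigma>)) * (\<epsilon> / m) \<le> \<pi> \<sigma> * ?c \<sigma> + \<pi> (?\<sigma>' \<sigma>) * ?c (?\<sigma>' \<sigma>)" for \<sigma>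
  proof -
    have "\<epsilon> / m \<le> ?c \<sigma> + ?c (?\<sigma>' \<sigma>)"
      using assouad_weight_flip_coord_diff[OF assms(2,3), of \<sigma> j] by linarith
    then have "min (\<pi> \<sigma>) (\<pi> (?\<sigma>' \<sigma>)) * (\<epsilon> / m) \<le> min (\<pi> \<sigma>) (\<pi> (?\<sigma>' \<sigma>)) * (?c \<sigma> + ?c (?\<sigma>' \<sigma>))"
      using assms(4) by (intro mult_left_mono) auto
    also have "\<dots> \<le> \<pi> \<sigma> * ?c \<sigma> + \<pi> (?\<sigma>' \<sigma>) * ?c (?\<sigma>' \<sigma>)"
      by (simp add: distrib_left add_mono mult_right_mono)
    finally show ?thesis .
  qed
  have "(\<epsilon> / m) * (\<Sum>\<sigma>\<in>?C. min (\<pi> \<sigma>) (\<pi> (?\<sigma>' \<sigma>))) = (\<Sum>\<sigma>\<in>?C. min (\<pi> \<sigma>) (\<pi> (?\<sigma>' \<sigma>)) * (\<epsilon> / m))"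
    by (simp add: sum_distrib_left mult.commute)
  also have "\<dots> \<le> (\<Sum>\<sigma>\<in>?C. \<pi> \<sigma> * ?c \<sigma> + \<pi> (?\<sigma>' \<sigma>) * ?c (?\<sigma>' \<sigma>))"
    by (intro sum_mono pointwise)
  also have "\<dots> = 2 * (\<Sum>\<sigma>\<in>?C. \<pi> \<sigma> * ?c \<sigma>)"
    using sum_flip_coord[OF assms(1), of "\<lambda>\<sigma>. \<pi> \<sigma> * ?c \<sigma>"] by (simp add: sum.distrib)
  finally show ?thesis by (simp add: field_simps)
qed

lemma sum_abs_even_le_positive_part:
  assumes "m > 0" "(\<Sum>i<2 * m. q i) \<le> 1"
  shows "(\<Sum>j<m. \<bar>assouad_weight \<epsilon> m \<sigma> (2 * j) - q (2 * j)\<bar>)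
    \<le> 2 * (\<Sum>i<2 * m. max 0 (assouad_weight \<epsilon> m \<sigma> i - q i))"
proof -
  let ?p = "assouad_weight \<epsilon> m \<sigma>"
  have "(\<Sum>j<m. \<bar>?p (2 * j) - q (2 * j)\<bar>) \<le> (\<Sum>j<m. \<bar>?p (2 * j) - q (2 * j)\<bar> + \<bar>?p (2 * j + 1) - q (2 * j + 1)\<bar>)"
    by (intro sum_mono) auto
  also have "\<dots> = (\<Sum>i<2 * m. \<bar>?p i - q i\<bar>)"
    by (rule sum_lessThan_double[symmetric])
  also have "\<dots> \<le> (\<Sum>i<2 * m. \<bar>?p i - q i\<bar>) + ((\<Sum>i<2 * m. ?p i) - (\<Sum>i<2 * m. q i))"
    using assouad_weight_sum[OF assms(1)] assms(2) by simp
  also have "\<dots> = (\<Sum>i<2 * m. \<bar>?p i - q i\<bar> + (?p i - q i))"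
    by (simp add: sum.distrib sum_subtractf)
  also have "\<dots> = 2 * (\<Sum>i<2 * m. max 0 (?p i - q i))"
    by (simp add: sum_distrib_left) (intro sum.cong; auto simp: max_def)
  finally show ?thesis .
qed

lemma assouad_loss_bound:
  assumes "m > 0" "0 \<le> \<epsilon>" "\<And>i. 0 \<le> q i" "(\<Sum>i<2 * m. q i) \<le> 1" "\<And>\<sigma>. 0 \<le> \<pi> \<sigma>"
  shows "(\<epsilon> / (4 * real m)) * (\<Sum>j<m. \<Sum>\<sigma>\<in>PiE {..<m} (\<lambda>_. UNIV). min (\<pi> \<sigma>) (\<pi> (flip_coord j \<sigma>)))
     \<le> (\<Sum>\<sigma>\<in>PiE {..<m} (\<lambda>_. UNIV). \<pi> \<sigma> * (\<Sum>i<2 * m. max 0 (assouad_weight \<epsilon> m \<sigma> i - q i)))"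
proof -
  let ?C = "PiE {..<m} (\<lambda>_. UNIV :: bool set)"
  have "(\<epsilon> / (4 * real m)) * (\<Sum>j<m. \<Sum>\<sigma>\<in>?C. min (\<pi> \<sigma>) (\<pi> (flip_coord j \<sigma>)))
      = (\<Sum>j<m. (\<epsilon> / (2 * m)) * (\<Sum>\<sigma>\<in>?C. min (\<pi> \<sigma>) (\<pi> (flip_coord j \<sigma>)))) / 2"
    by (simp add: sum_distrib_left sum_divide_distrib)
  also have "\<dots> \<le> (\<Sum>j<m. \<Sum>\<sigma>\<in>?C. \<pi> \<sigma> * \<bar>assouad_weight \<epsilon> m \<sigma> (2 * j) - q (2 * j)\<bar>) / 2"
    using sum_min_flip_coord_le_pair_loss[OF _ assms(1,2,5)] by (intro divide_right_mono sum_mono) auto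
  also have "\<dots> = (\<Sum>\<sigma>\<in>?C. \<pi> \<sigma> * ((\<Sum>j<m. \<bar>assouad_weight \<epsilon> m \<sigma> (2 * j) - q (2 * j)\<bar>) / 2))"
    by (subst sum.swap) (simp add: sum_distrib_left sum_divide_distrib)
  also have "\<dots> \<le> (\<Sum>\<sigma>\<in>?C. \<pi> \<sigma> * (\<Sum>i<2 * m. max 0 (assouad_weight \<epsilon> m \<sigma> i - q i)))"
    using assms(5) sum_abs_even_le_positive_part[OF assms(1,4)]
    by (intro sum_mono mult_left_mono) (auto simp: field_simps)
  finally show ?thesis .
qed

lemma real_sqrt_prod: "finite I \<Longrightarrow> sqrt (\<Prod>t\<in>I. f t) = (\<Prod>t\<in>I. sqrt (f t))"
  by (induction I rule: finite_induct) (auto simp: real_sqrt_mult)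

text \<open>Le Cam's bound: by Cauchy--Schwarz, \<open>(\<Sum>\<surd>(AB))\<^sup>2 \<le> \<Sum>min(A,B) \<cdot> \<Sum>max(A,B) \<le> 2 \<Sum>min(A,B)\<close>,
  and the affinity \<open>\<Sum>\<surd>(AB)\<close> of product distributions is the product of the affinities.\<close>

lemma sum_min_prod_ge_affinity_power:
  fixes a b :: "'k \<Rightarrow> real"
  assumes K: "finite K" and I: "finite I" and a0: "\<And>i. 0 \<le> a i" and b0: "\<And>i. 0 \<le> b i"
    and sa: "(\<Sum>i\<in>K. a i) = 1" and sb: "(\<Sum>i\<in>K. b i) = 1"
    and \<beta>: "\<beta> \<le> (\<Sum>i\<in>K. sqrt (a i * b i))" "0 \<le> \<beta>"
  shows "\<beta> ^ (2 * card I) / 2 \<le> (\<Sum>w\<in>PiE I (\<lambda>_. K). min (\<Prod>t\<in>I. a (w t)) (\<Prod>t\<in>I. b (w t)))"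
proof -
  define W where "W = PiE I (\<lambda>_. K)"
  define A where "A w = (\<Prod>t\<in>I. a (w t))" for w
  define B where "B w = (\<Prod>t\<in>I. b (w t))" for w
  have A0: "0 \<le> A w" and B0: "0 \<le> B w" for w
    unfolding A_def B_def by (simp_all add: a0 b0 prod_nonneg)
  have SA: "(\<Sum>w\<in>W. A w) = 1" and SB: "(\<Sum>w\<in>W. B w) = 1"
    using prod_sum_PiE[OF I, of "\<lambda>_. K" "\<lambda>_ i. a i"] prod_sum_PiE[OF I, of "\<lambda>_. K" "\<lambda>_ i. b i"]
    K sa sb unfolding A_def B_def W_def by simp_all
  have affinity: "(\<Sum>w\<in>W. sqrt (A w * B w)) = (\<Sum>i\<in>K. sqrt (a i * b i)) ^ card I"
  proof -
    have "(\<Sum>w\<in>W. sqrt (A w * B w)) = (\<Sum>w\<in>W. \<Prod>t\<in>I. sqrt (a (w t) * b (w t)))"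
      unfolding A_def B_def by (simp add: prod.distrib[symmetric] real_sqrt_prod I)
    also have "\<dots> = (\<Prod>t\<in>I. \<Sum>i\<in>K. sqrt (a i * b i))"
      using prod_sum_PiE[OF I, of "\<lambda>_. K" "\<lambda>_ i. sqrt (a i * b i)"] K unfolding W_def by simp
    finally show ?thesis by simp
  qed
  have "\<beta> ^ card I \<le> (\<Sum>w\<in>W. sqrt (A w * B w))"
    unfolding affinity using \<beta> by (intro power_mono) auto
  then have "\<beta> ^ (2 * card I) \<le> (\<Sum>w\<in>W. sqrt (A w * B w))\<^sup>2"
    using \<beta>(2) by (metis power_mono power_mult mult.commute zero_le_power)
  also have "(\<Sum>w\<in>W. sqrt (A w * B w)) = (\<Sum>w\<in>W. sqrt (min (A w) (B w)) * sqrt (max (A w) (B w)))"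
    by (intro sum.cong) (auto simp: real_sqrt_mult[symmetric] min_def max_def mult.commute)
  also have "(\<dots>)\<^sup>2 \<le> (\<Sum>w\<in>W. (sqrt (min (A w) (B w)))\<^sup>2) * (\<Sum>w\<in>W. (sqrt (max (A w) (B w)))\<^sup>2)"
    by (rule Cauchy_Schwarz_ineq_sum)
  also have "\<dots> = (\<Sum>w\<in>W. min (A w) (B w)) * (\<Sum>w\<in>W. max (A w) (B w))"
    using A0 B0 by (intro arg_cong2[where f="(*)"] sum.cong) (auto simp: max_def min_def)
  also have "\<dots> \<le> (\<Sum>w\<in>W. min (A w) (B w)) * 2"
  proof (rule mult_left_mono)
    have "(\<Sum>w\<in>W. max (A w) (B w)) \<le> (\<Sum>w\<in>W. A w + B w)"
      using A0 B0 by (intro sum_mono) auto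
    then show "(\<Sum>w\<in>W. max (A w) (B w)) \<le> 2" using SA SB by (simp add: sum.distrib)
    show "0 \<le> (\<Sum>w\<in>W. min (A w) (B w))" using A0 B0 by (intro sum_nonneg) auto
  qed
  finally show ?thesis unfolding W_def A_def B_def by simp
qed

lemma assouad_weight_affinity_flip_coord:
  assumes "m > 0" "j < m" "0 \<le> \<epsilon>" "\<epsilon> \<le> 1"
  shows "1 - \<epsilon>\<^sup>2 / m \<le> (\<Sum>i<2 * m. sqrt (assouad_weight \<epsilon> m \<sigma> i * assouad_weight \<epsilon> m (flip_coord j \<sigma>) i))"
proof -
  let ?p = "assouad_weight \<epsilon> m"
  let ?g = "\<lambda>i. sqrt (?p \<sigma> i * ?p (flip_coord j \<sigma>) i)"
  have pair: "1 / m - (if j' = j then \<epsilon>\<^sup>2 / m else 0) \<le> ?g (2 * j') + ?g (2 * j' + 1)" for j'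
  proof (cases "j' = j")
    case True
    have "0 \<le> 1 - \<epsilon>\<^sup>2" and "sqrt (1 - \<epsilon>\<^sup>2) \<le> 1"
      using assms by (simp_all add: power_le_one)
    then have "1 - \<epsilon>\<^sup>2 \<le> sqrt (1 - \<epsilon>\<^sup>2)"
      using mult_left_mono[of "sqrt (1 - \<epsilon>\<^sup>2)" 1 "sqrt (1 - \<epsilon>\<^sup>2)"] by simp
    have "?g (2 * j) = sqrt (1 - \<epsilon>\<^sup>2) / (2 * m)" "?g (2 * j + 1) = sqrt (1 - \<epsilon>\<^sup>2) / (2 * m)"
      using assms(1) unfolding assouad_weight_def flip_coord_def
      by (auto simp: real_sqrt_divide real_sqrt_mult power2_eq_square field_simps)
    with \<open>1 - \<epsilon>\<^sup>2 \<le> sqrt (1 - \<epsilon>\<^sup>2)\<close> True show ?thesis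
      by (simp add: diff_divide_distrib[symmetric] divide_right_mono add_divide_distrib[symmetric])
  next
    case False
    then have "?p (flip_coord j \<sigma>) i = ?p \<sigma> i" if "i div 2 = j'" for i
      using that unfolding assouad_weight_def flip_coord_def by auto
    then have "?g (2 * j') + ?g (2 * j' + 1) = ?p \<sigma> (2 * j') + ?p \<sigma> (2 * j' + 1)"
      using assouad_weight_nonneg[of \<epsilon>] assms(3,4) by simp
    with False show ?thesis using assouad_weight_pair[OF assms(1), of \<epsilon> \<sigma> j'] by simp
  qed
  have "1 - \<epsilon>\<^sup>2 / m = (\<Sum>j'<m. 1 / m - (if j' = j then \<epsilon>\<^sup>2 / m else 0))"
    using assms(1,2) by (simp add: sum_subtractf)
  also have "\<dots> \<le> (\<Sum>j'<m. ?g (2 * j') + ?g (2 * j' + 1))"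
    by (intro sum_mono pair)
  also have "\<dots> = (\<Sum>i<2 * m. ?g i)" by (rule sum_lessThan_double[symmetric])
  finally show ?thesis .
qed

lemma assouad_sample_overlap:
  assumes "m > 0" "j < m" "0 \<le> \<epsilon>" "\<epsilon> \<le> 1" "n > 0" "\<epsilon>\<^sup>2 = real m / (16 * real n)"
  shows "7/16 \<le> (\<Sum>w\<in>PiE {..<n} (\<lambda>_. {..<2 * m}).
     min (\<Prod>t<n. assouad_weight \<epsilon> m \<sigma> (w t)) (\<Prod>t<n. assouad_weight \<epsilon> m (flip_coord j \<sigma>) (w t)))"
proof -
  define x where "x = \<epsilon>\<^sup>2 / m"
  have "x = 1 / (16 * real n)"
    using assms(1,6) by (simp add: x_def field_simps)
  then have x: "real (2 * n) * x = 1/8" "x \<le> 1"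
    using assms(5) by simp_all
  have "1 + real (2 * n) * (- x) \<le> (1 + - x) ^ (2 * n)"
    using x(2) by (intro Bernoulli_inequality) simp
  then have "7/16 \<le> (1 - x) ^ (2 * card {..<n}) / 2"
    using x(1) by simp
  also have "\<dots> \<le> (\<Sum>w\<in>PiE {..<n} (\<lambda>_. {..<2 * m}).
     min (\<Prod>t<n. assouad_weight \<epsilon> m \<sigma> (w t)) (\<Prod>t<n. assouad_weight \<epsilon> m (flip_coord j \<sigma>) (w t)))"
    unfolding x_def
    by (rule sum_min_prod_ge_affinity_power[OF _ _ _ _ _ _ assouad_weight_affinity_flip_coord[OF assms(1-4)]])
       (use assms x assouad_weight_nonneg assouad_weight_sum in \<open>auto simp: x_def\<close>)
  finally show ?thesis .
qed

lemma coupling_mass_leaving_ball_ge: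
  fixes a :: "'a::metric_space"
  assumes "\<mu> \<in> couplings P Q"
  shows "measure P {a} - measure Q (ball a \<rho>) \<le> measure \<mu> ({a} \<times> - ball a \<rho>)"
proof -
  from assms have s\<mu>: "sets \<mu> = sets borel" and "prob_space \<mu>" and P_eq: "distr \<mu> borel fst = P"
    and Q_eq: "distr \<mu> borel snd = Q" unfolding couplings_def by auto
  interpret prob_space \<mu> by fact
  have sp: "space \<mu> = UNIV" using sets_eq_imp_space_eq[OF s\<mu>] by simp
  have A_sets: "{a} \<times> - ball a \<rho> \<in> sets \<mu>"
    unfolding s\<mu> by (intro borel_closed closed_Times) auto
  have B_sets: "UNIV \<times> ball a \<rho> \<in> sets \<mu>"
    unfolding s\<mu> by (intro borel_open open_Times) auto
  have fst_meas: "fst \<in> borel_measurable \<mu>" and snd_meas: "snd \<in> borel_measurable \<mu>"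
    unfolding measurable_cong_sets[OF s\<mu> refl]
    by (auto intro!: borel_measurable_continuous_onI continuous_on_fst continuous_on_snd continuous_on_id)
  have "measure P {a} = measure \<mu> ({a} \<times> UNIV)"
    using measure_distr[OF fst_meas, of "{a}"] P_eq sp by (simp add: vimage_fst)
  also have "\<dots> \<le> measure \<mu> ({a} \<times> - ball a \<rho> \<union> UNIV \<times> ball a \<rho>)"
    using A_sets B_sets by (intro finite_measure_mono) auto
  also have "\<dots> \<le> measure \<mu> ({a} \<times> - ball a \<rho>) + measure \<mu> (UNIV \<times> ball a \<rho>)"
    by (intro measure_Un_le A_sets B_sets)
  also have "measure \<mu> (UNIV \<times> ball a \<rho>) = measure Q (ball a \<rho>)"
    using measure_distr[OF snd_meas, of "ball a \<rho>"] Q_eq sp by (simp add: vimage_snd)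
  finally show ?thesis by simp
qed

lemma wasserstein_pow_ge_separated_atoms:
  fixes x :: "nat \<Rightarrow> 'a::metric_space"
  assumes r: "r > 0" and \<delta>: "\<delta> > 0"
    and sep: "\<And>i j. i < K \<Longrightarrow> j < K \<Longrightarrow> i \<noteq> j \<Longrightarrow> \<delta> \<le> dist (x i) (x j)"
    and atoms: "\<And>i. i < K \<Longrightarrow> p i \<le> measure P {x i}"
  shows "ennreal ((\<delta>/2) powr r * (\<Sum>i<K. max 0 (p i - measure Q (ball (x i) (\<delta>/2)))))
    \<le> wasserstein_pow r P Q"
  unfolding wasserstein_pow_def
proof (rule INF_greatest)
  fix \<mu> assume \<mu>: "\<mu> \<in> couplings P Q"
  then have s\<mu>: "sets \<mu> = sets borel" and "prob_space \<mu>" unfolding couplings_def by auto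
  interpret prob_space \<mu> by fact
  define c where "c = (\<delta>/2) powr r"
  have c0: "0 \<le> c" unfolding c_def by simp
  define A where "A i = {x i} \<times> - ball (x i) (\<delta>/2)" for i
  have A_sets: "A i \<in> sets \<mu>" for i
    unfolding s\<mu> A_def by (intro borel_closed closed_Times) auto
  have disj: "disjoint_family_on A {..<K}"
    unfolding disjoint_family_on_def
  proof (intro ballI impI)
    fix i j assume "i \<in> {..<K}" "j \<in> {..<K}" "i \<noteq> j"
    then have "x i \<noteq> x j" using sep[of i j] \<delta> by auto
    then show "A i \<inter> A j = {}" unfolding A_def by auto
  qed
  have "ennreal (c * (\<Sum>i<K. max 0 (p i - measure Q (ball (x i) (\<delta>/2)))))
      = (\<Sum>i<K. ennreal c * ennreal (max 0 (p i - measure Q (ball (x i) (\<delta>/2)))))"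
    using c0 by (simp add: sum_distrib_left ennreal_mult sum_ennreal[symmetric])
  also have "\<dots> \<le> (\<Sum>i<K. ennreal c * emeasure \<mu> (A i))"
  proof (intro sum_mono mult_left_mono)
    fix i assume "i \<in> {..<K}"
    then have "p i - measure Q (ball (x i) (\<delta>/2)) \<le> measure \<mu> (A i)"
      using coupling_mass_leaving_ball_ge[OF \<mu>, of "x i" "\<delta>/2"] atoms[of i] unfolding A_def by simp
    then show "ennreal (max 0 (p i - measure Q (ball (x i) (\<delta>/2)))) \<le> emeasure \<mu> (A i)"
      by (simp add: emeasure_eq_measure max_def)
  qed simp
  also have "\<dots> = ennreal c * emeasure \<mu> (\<Union>i<K. A i)"
    using sum_emeasure[of A "{..<K}" \<mu>] A_sets disj by (simp add: image_subset_iff sum_distrib_left[symmetric])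
  also have "\<dots> = (\<integral>\<^sup>+ z. ennreal c * indicator (\<Union>i<K. A i) z \<partial>\<mu>)"
    using A_sets by (intro nn_integral_cmult_indicator[symmetric]) auto
  also have "\<dots> \<le> (\<integral>\<^sup>+ z. ennreal (dist (fst z) (snd z) powr r) \<partial>\<mu>)"
  proof (intro nn_integral_mono)
    fix z :: "'a \<times> 'a"
    have "c \<le> dist (fst z) (snd z) powr r" if "z \<in> A i" for i
      using that \<delta> r unfolding c_def A_def by (auto simp: dist_commute intro!: powr_mono2)
    then show "ennreal c * indicator (\<Union>i<K. A i) z \<le> ennreal (dist (fst z) (snd z) powr r)"
      by (auto simp: indicator_def)
  qed
  finally show "ennreal ((\<delta>/2) powr r * (\<Sum>i<K. max 0 (p i - measure Q (ball (x i) (\<delta>/2)))))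
      \<le> (\<integral>\<^sup>+ z. ennreal (dist (fst z) (snd z) powr r) \<partial>\<mu>)" unfolding c_def .
qed

lemma sum_measure_separated_balls_le_1:
  fixes x :: "nat \<Rightarrow> 'a::metric_space"
  assumes Q: "Q \<in> borel_prob_measures"
    and sep: "\<And>i j. i < K \<Longrightarrow> j < K \<Longrightarrow> i \<noteq> j \<Longrightarrow> \<delta> \<le> dist (x i) (x j)"
  shows "(\<Sum>i<K. measure Q (ball (x i) (\<delta>/2))) \<le> 1"
proof -
  interpret Q: prob_space Q using Q by (simp add: borel_prob_measures_def)
  have "disjoint_family_on (\<lambda>i. ball (x i) (\<delta>/2)) {..<K}"
    unfolding disjoint_family_on_def
  proof (intro ballI impI equals0I)
    fix i j y assume "i \<in> {..<K}" "j \<in> {..<K}" "i \<noteq> j" "y \<in> ball (x i) (\<delta>/2) \<inter> ball (x j) (\<delta>/2)"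
    then have "dist (x i) (x j) < \<delta>"
      using dist_triangle[of "x i" "x j" y] by (simp add: dist_commute)
    then show False using sep[of i j] \<open>i \<in> {..<K}\<close> \<open>j \<in> {..<K}\<close> \<open>i \<noteq> j\<close> by simp
  qed
  then have "(\<Sum>i<K. measure Q (ball (x i) (\<delta>/2))) = measure Q (\<Union>i<K. ball (x i) (\<delta>/2))"
    using Q by (intro measure_finite_Union[symmetric])
      (simp_all add: borel_prob_measures_def Q.emeasure_eq_measure image_subset_iff borel_open)
  then show ?thesis by (simp add: Q.prob_le_1)
qed

lemma separated_imp_inj_on:
  assumes "\<delta> > 0" "\<And>i j. i < K \<Longrightarrow> j < K \<Longrightarrow> i \<noteq> j \<Longrightarrow> \<delta> \<le> dist (x i) (x j)"
  shows "inj_on x {..<K}"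
proof (rule inj_onI)
  fix i j assume "i \<in> {..<K}" "j \<in> {..<K}" "x i = x j"
  then show "i = j" using assms(2)[of i j] assms(1) by (cases "i = j") auto
qed

definition assouad_measure :: "(nat \<Rightarrow> 'a::metric_space) \<Rightarrow> real \<Rightarrow> nat \<Rightarrow> (nat \<Rightarrow> bool) \<Rightarrow> 'a measure" where
  "assouad_measure x \<epsilon> m \<sigma> =
     distr (point_measure {..<2 * m} (\<lambda>i. ennreal (assouad_weight \<epsilon> m \<sigma> i))) borel x"

lemma assouad_measure_in_borel_prob_measures:
  assumes "m > 0" "\<bar>\<epsilon>\<bar> \<le> 1"
  shows "assouad_measure x \<epsilon> m \<sigma> \<in> borel_prob_measures"
proof -
  let ?M = "point_measure {..<2 * m} (\<lambda>i. ennreal (assouad_weight \<epsilon> m \<sigma> i))"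
  have "emeasure ?M (space ?M) = (\<Sum>i<2 * m. ennreal (assouad_weight \<epsilon> m \<sigma> i))"
    by (simp add: space_point_measure emeasure_point_measure_finite)
  also have "\<dots> = 1"
    using assouad_weight_sum[OF assms(1)] assouad_weight_nonneg[OF assms(2)] by (simp add: sum_ennreal)
  finally have "prob_space ?M" by (rule prob_spaceI)
  then show ?thesis unfolding assouad_measure_def borel_prob_measures_def
    by (auto intro!: prob_space.prob_space_distr)
qed

lemma emeasure_assouad_measure_atom:
  assumes "inj_on x {..<2 * m}" "i < 2 * m"
  shows "emeasure (assouad_measure x \<epsilon> m \<sigma>) {x i} = ennreal (assouad_weight \<epsilon> m \<sigma> i)"
proof -
  have "x -` {x i} \<inter> {..<2 * m} = {i}" using assms by (auto simp: inj_on_def)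
  then show ?thesis unfolding assouad_measure_def using assms(2)
    by (subst emeasure_distr) (auto simp: space_point_measure emeasure_point_measure_finite intro!: borel_closed)
qed

lemma sum_emeasure_singleton_le_nn_integral:
  assumes A: "finite A" and inj: "inj_on z A" and sets: "\<And>a. a \<in> A \<Longrightarrow> {z a} \<in> sets M"
  shows "(\<Sum>a\<in>A. emeasure M {z a} * h (z a)) \<le> (\<integral>\<^sup>+ \<omega>. h \<omega> \<partial>M)"
proof -
  have pointwise: "(\<Sum>a\<in>A. h (z a) * indicator {z a} \<omega>) \<le> h \<omega>" for \<omega>
  proof -
    have "(\<Sum>a\<in>A. h (z a) * indicator {z a} \<omega>) = (\<Sum>b\<in>z ` A. h b * indicator {b} \<omega>)"
      using inj by (simp add: sum.reindex)
    also have "\<dots> = (\<Sum>b\<in>z ` A. if b = \<omega> then h \<omega> else 0)"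
      by (intro sum.cong) (auto simp: indicator_def)
    also have "\<dots> \<le> h \<omega>"
      using A by (simp add: sum.delta')
    finally show ?thesis .
  qed
  have "(\<Sum>a\<in>A. emeasure M {z a} * h (z a)) = (\<Sum>a\<in>A. \<integral>\<^sup>+ \<omega>. h (z a) * indicator {z a} \<omega> \<partial>M)"
    using sets by (intro sum.cong refl) (simp add: nn_integral_cmult_indicator mult.commute)
  also have "\<dots> = (\<integral>\<^sup>+ \<omega>. (\<Sum>a\<in>A. h (z a) * indicator {z a} \<omega>) \<partial>M)"
    using sets by (intro nn_integral_sum[symmetric]) auto
  also have "\<dots> \<le> (\<integral>\<^sup>+ \<omega>. h \<omega> \<partial>M)"
    by (intro nn_integral_mono pointwise)
  finally show ?thesis .
qed

lemma nn_integral_PiM_ge_sum_atoms: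
  fixes x :: "nat \<Rightarrow> 'a::metric_space" and h :: "(nat \<Rightarrow> 'a) \<Rightarrow> ennreal"
  assumes P: "P \<in> borel_prob_measures" and inj: "inj_on x K" and K: "finite K"
    and atoms: "\<And>i. i \<in> K \<Longrightarrow> emeasure P {x i} = ennreal (p i)" and p0: "\<And>i. 0 \<le> p i"
  shows "(\<Sum>w\<in>PiE {..<n} (\<lambda>_. K). ennreal (\<Prod>t<n. p (w t)) * h (\<lambda>t\<in>{..<n}. x (w t)))
          \<le> (\<integral>\<^sup>+ \<omega>. h \<omega> \<partial>PiM {..<n} (\<lambda>_. P))"
proof -
  define W where "W = PiE {..<n} (\<lambda>_. K)"
  define xw where "xw w = (\<lambda>t\<in>{..<n}. x (w t))" for w
  have sP: "sets P = sets borel" and "prob_space P" using P by (auto simp: borel_prob_measures_def)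
  interpret product_sigma_finite "\<lambda>_. P"
    unfolding product_sigma_finite_def using prob_space_imp_sigma_finite[OF \<open>prob_space P\<close>] by simp
  have xw_inj: "inj_on xw W"
  proof (rule inj_onI, rule ext)
    fix w w' t assume ww': "w \<in> W" "w' \<in> W" "xw w = xw w'"
    show "w t = w' t"
    proof (cases "t < n")
      case True
      then have "x (w t) = x (w' t)" using ww'(3) unfolding xw_def by (metis lessThan_iff restrict_apply')
      then show ?thesis using inj ww'(1,2) True unfolding W_def by (auto simp: inj_on_def PiE_iff)
    qed (use ww'(1,2) in \<open>auto simp: W_def PiE_def extensional_def\<close>)
  qed
  have singleton: "{xw w} = PiE {..<n} (\<lambda>t. {x (w t)})" for w
    unfolding xw_def by (auto simp: PiE_def extensional_def restrict_def fun_eq_iff)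
  have "(\<Sum>w\<in>W. ennreal (\<Prod>t<n. p (w t)) * h (xw w)) = (\<Sum>w\<in>W. emeasure (PiM {..<n} (\<lambda>_. P)) {xw w} * h (xw w))"
  proof (intro sum.cong refl arg_cong2[where f="(*)"])
    fix w assume "w \<in> W"
    then have "ennreal (\<Prod>t<n. p (w t)) = (\<Prod>t<n. emeasure P {x (w t)})"
      using p0 unfolding W_def by (simp add: atoms PiE_iff prod_ennreal)
    also have "\<dots> = emeasure (PiM {..<n} (\<lambda>_. P)) {xw w}"
      unfolding singleton by (rule emeasure_PiM[symmetric]) (auto simp: sP intro!: borel_closed)
    finally show "ennreal (\<Prod>t<n. p (w t)) = emeasure (PiM {..<n} (\<lambda>_. P)) {xw w}" .
  qed
  also have "\<dots> \<le> (\<integral>\<^sup>+ \<omega>. h \<omega> \<partial>PiM {..<n} (\<lambda>_. P))"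
  proof (rule sum_emeasure_singleton_le_nn_integral[OF _ xw_inj])
    show "finite W" unfolding W_def using K by (simp add: finite_PiE)
    show "{xw w} \<in> sets (PiM {..<n} (\<lambda>_. P))" for w
      unfolding singleton by (intro sets_PiM_I_finite) (auto simp: sP intro!: borel_closed)
  qed
  finally show ?thesis unfolding W_def xw_def .
qed

lemma risk_ge_sum_atom_samples:
  fixes x :: "nat \<Rightarrow> 'a::metric_space"
  assumes E: "(U, Phat) \<in> estimators n r" and P: "P \<in> borel_prob_measures"
    and inj: "inj_on x K" and K: "finite K"
    and atoms: "\<And>i. i \<in> K \<Longrightarrow> emeasure P {x i} = ennreal (p i)" and p0: "\<And>i. 0 \<le> p i"
  shows "(\<Sum>w\<in>PiE {..<n} (\<lambda>_. K). ennreal (\<Prod>t<n. p (w t)) *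
            (\<integral>\<^sup>+ u. wasserstein_pow r P (Phat (\<lambda>t\<in>{..<n}. x (w t)) u) \<partial>U))
         \<le> risk n r U Phat P"
proof -
  interpret U: prob_space U using E by (simp add: estimators_def)
  have "sets (PiM {..<n} (\<lambda>_. P) \<Otimes>\<^sub>M U) = sets (PiM {..<n} (\<lambda>_. borel) \<Otimes>\<^sub>M U)"
    using P by (intro sets_pair_measure_cong sets_PiM_cong refl) (simp add: borel_prob_measures_def)
  then have "(\<lambda>z. wasserstein_pow r P (Phat (fst z) (snd z))) \<in> borel_measurable (PiM {..<n} (\<lambda>_. P) \<Otimes>\<^sub>M U)"
    using E P unfolding estimators_def by (simp cong: measurable_cong_sets)
  then have "risk n r U Phat P = (\<integral>\<^sup>+ \<omega>. \<integral>\<^sup>+ u. wasserstein_pow r P (Phat \<omega> u) \<partial>U \<partial>PiM {..<n} (\<lambda>_. P))"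
    unfolding risk_def by (simp add: U.nn_integral_fst[symmetric])
  then show ?thesis
    using nn_integral_PiM_ge_sum_atoms[OF P inj K atoms p0] by simp
qed

lemma sum_wasserstein_pow_assouad_ge:
  fixes x :: "nat \<Rightarrow> 'a::metric_space"
  assumes r: "0 < r" and m: "0 < m" and \<epsilon>: "0 \<le> \<epsilon>" "\<epsilon> \<le> 1" and \<delta>: "0 < \<delta>"
    and sep: "\<And>i j. i < 2 * m \<Longrightarrow> j < 2 * m \<Longrightarrow> i \<noteq> j \<Longrightarrow> \<delta> \<le> dist (x i) (x j)"
    and Q: "Q \<in> borel_prob_measures" and \<pi>0: "\<And>\<sigma>. 0 \<le> \<pi> \<sigma>"
  shows "ennreal ((\<delta>/2) powr r * (\<epsilon> / (4 * real m)) *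
           (\<Sum>j<m. \<Sum>\<sigma>\<in>PiE {..<m} (\<lambda>_. UNIV). min (\<pi> \<sigma>) (\<pi> (flip_coord j \<sigma>))))
     \<le> (\<Sum>\<sigma>\<in>PiE {..<m} (\<lambda>_. UNIV). ennreal (\<pi> \<sigma>) * wasserstein_pow r (assouad_measure x \<epsilon> m \<sigma>) Q)"
proof -
  define C where "C = PiE {..<m} (\<lambda>_. UNIV :: bool set)"
  define S where "S = (\<Sum>j<m. \<Sum>\<sigma>\<in>C. min (\<pi> \<sigma>) (\<pi> (flip_coord j \<sigma>)))"
  define c where "c = (\<delta>/2) powr r"
  define q where "q i = measure Q (ball (x i) (\<delta>/2))" for i
  define D where "D \<sigma> = (\<Sum>i<2 * m. max 0 (assouad_weight \<epsilon> m \<sigma> i - q i))" for \<sigma>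
  have c0: "0 \<le> c" and D0: "0 \<le> D \<sigma>" for \<sigma>
    unfolding c_def D_def by (auto intro: sum_nonneg)
  have inj: "inj_on x {..<2 * m}"
    using separated_imp_inj_on[of \<delta> "2 * m" x] \<delta> sep by blast
  have W_ge: "ennreal (c * D \<sigma>) \<le> wasserstein_pow r (assouad_measure x \<epsilon> m \<sigma>) Q" for \<sigma>
    unfolding c_def D_def q_def
  proof (rule wasserstein_pow_ge_separated_atoms[where x=x, OF r \<delta> sep])
    fix i assume "i < 2 * m"
    with inj show "assouad_weight \<epsilon> m \<sigma> i \<le> measure (assouad_measure x \<epsilon> m \<sigma>) {x i}"
      using emeasure_assouad_measure_atom[of x m i \<epsilon> \<sigma>] assouad_weight_nonneg[of \<epsilon> m \<sigma> i] \<epsilon>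
      by (simp add: measure_def)
  qed
  have loss: "(\<epsilon> / (4 * real m)) * S \<le> (\<Sum>\<sigma>\<in>C. \<pi> \<sigma> * D \<sigma>)"
    unfolding S_def C_def D_def q_def
    by (rule assouad_loss_bound[OF m \<epsilon>(1) _ sum_measure_separated_balls_le_1[where K="2 * m", OF Q sep] \<pi>0])
      simp
  have "c * (\<epsilon> / (4 * real m)) * S \<le> (\<Sum>\<sigma>\<in>C. \<pi> \<sigma> * (c * D \<sigma>))"
    using mult_left_mono[OF loss c0] by (simp add: sum_distrib_left mult_ac)
  then have "ennreal (c * (\<epsilon> / (4 * real m)) * S) \<le> ennreal (\<Sum>\<sigma>\<in>C. \<pi> \<sigma> * (c * D \<sigma>))"
    by (rule ennreal_leI)
  also have "\<dots> = (\<Sum>\<sigma>\<in>C. ennreal (\<pi> \<sigma>) * ennreal (c * D \<sigma>))"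
    using \<pi>0 c0 D0 by (simp add: ennreal_mult sum_ennreal[symmetric])
  also have "\<dots> \<le> (\<Sum>\<sigma>\<in>C. ennreal (\<pi> \<sigma>) * wasserstein_pow r (assouad_measure x \<epsilon> m \<sigma>) Q)"
    by (intro sum_mono mult_left_mono W_ge) simp
  finally show ?thesis unfolding c_def S_def C_def .
qed

lemma sum_risk_assouad_measure_ge:
  fixes x :: "nat \<Rightarrow> 'a::metric_space" and U :: "'u measure"
    and Phat :: "(nat \<Rightarrow> 'a) \<Rightarrow> 'u \<Rightarrow> 'a measure"
  assumes r: "0 < r" and m: "0 < m" and \<epsilon>: "0 \<le> \<epsilon>" "\<epsilon> \<le> 1"
    and \<delta>: "0 < \<delta>" and sep: "\<And>i j. i < 2 * m \<Longrightarrow> j < 2 * m \<Longrightarrow> i \<noteq> j \<Longrightarrow> \<delta> \<le> dist (x i) (x j)"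
    and E: "(U, Phat) \<in> estimators n r"
  shows "ennreal ((\<delta>/2) powr r * (\<epsilon> / (4 * real m)) *
           (\<Sum>j<m. \<Sum>\<sigma>\<in>PiE {..<m} (\<lambda>_. UNIV). \<Sum>w\<in>PiE {..<n} (\<lambda>_. {..<2 * m}).
              min (\<Prod>t<n. assouad_weight \<epsilon> m \<sigma> (w t)) (\<Prod>t<n. assouad_weight \<epsilon> m (flip_coord j \<sigma>) (w t))))
         \<le> (\<Sum>\<sigma>\<in>PiE {..<m} (\<lambda>_. UNIV). risk n r U Phat (assouad_measure x \<epsilon> m \<sigma>))"
proof -
  define C where "C = PiE {..<m} (\<lambda>_. UNIV :: bool set)"
  define W where "W = PiE {..<n} (\<lambda>_. {..<2 * m})"
  define P where "P = assouad_measure x \<epsilon> m"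
  define \<pi> where "\<pi> \<sigma> w = (\<Prod>t<n. assouad_weight \<epsilon> m \<sigma> (w t))" for \<sigma> w
  define xw where "xw w = (\<lambda>t\<in>{..<n}. x (w t))" for w
  define c where "c = (\<delta>/2) powr r"
  \<comment> \<open>\<open>G w\<close> bounds the loss of any estimate made from the sample \<open>xw w\<close>, averaged over the prior\<close>
  define G where "G w = c * (\<epsilon> / (4 * real m)) * (\<Sum>j<m. \<Sum>\<sigma>\<in>C. min (\<pi> \<sigma> w) (\<pi> (flip_coord j \<sigma>) w))" for w
  have \<pi>0: "0 \<le> \<pi> \<sigma> w" for \<sigma> w
    unfolding \<pi>_def using \<epsilon> by (simp add: prod_nonneg assouad_weight_nonneg)
  have P_in: "P \<sigma> \<in> borel_prob_measures" for \<sigma>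
    unfolding P_def using m \<epsilon> by (intro assouad_measure_in_borel_prob_measures) auto
  have inj: "inj_on x {..<2 * m}"
    using separated_imp_inj_on[of \<delta> "2 * m" x] \<delta> sep by blast
  interpret U: prob_space U using E by (simp add: estimators_def)
  have estimate_in: "Phat (xw w) u \<in> borel_prob_measures" if "u \<in> space U" for w u
    using E that unfolding estimators_def xw_def by (auto simp: space_PiM)
  have loss_meas: "(\<lambda>u. wasserstein_pow r (P \<sigma>) (Phat (xw w) u)) \<in> borel_measurable U" for \<sigma> w
  proof -
    have "(\<lambda>z. wasserstein_pow r (P \<sigma>) (Phat (fst z) (snd z))) \<in> borel_measurable (PiM {..<n} (\<lambda>_. borel) \<Otimes>\<^sub>M U)"
      using E P_in unfolding estimators_def by blast
    from measurable_Pair2[OF this, of "xw w"] show ?thesis by (simp add: xw_def space_PiM)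
  qed
  have G_le: "ennreal (G w) \<le> (\<integral>\<^sup>+ u. (\<Sum>\<sigma>\<in>C. ennreal (\<pi> \<sigma> w) * wasserstein_pow r (P \<sigma>) (Phat (xw w) u)) \<partial>U)" for w
  proof -
    have "ennreal (G w) = (\<integral>\<^sup>+ u. ennreal (G w) \<partial>U)" by (simp add: U.emeasure_space_1)
    also have "\<dots> \<le> (\<integral>\<^sup>+ u. (\<Sum>\<sigma>\<in>C. ennreal (\<pi> \<sigma> w) * wasserstein_pow r (P \<sigma>) (Phat (xw w) u)) \<partial>U)"
      unfolding G_def C_def P_def c_def
      by (intro nn_integral_mono sum_wasserstein_pow_assouad_ge[OF r m \<epsilon> \<delta> sep] estimate_in \<pi>0)
    finally show ?thesis .
  qed
  have "c * (\<epsilon> / (4 * real m)) * (\<Sum>j<m. \<Sum>\<sigma>\<in>C. \<Sum>w\<in>W. min (\<pi> \<sigma> w) (\<pi> (flip_coord j \<sigma>) w)) = (\<Sum>w\<in>W. G w)"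
    unfolding G_def by (simp add: sum_distrib_left sum.swap[of _ W])
  then have "ennreal (c * (\<epsilon> / (4 * real m)) * (\<Sum>j<m. \<Sum>\<sigma>\<in>C. \<Sum>w\<in>W. min (\<pi> \<sigma> w) (\<pi> (flip_coord j \<sigma>) w)))
      = (\<Sum>w\<in>W. ennreal (G w))"
    using \<epsilon> \<pi>0 unfolding G_def c_def by (simp add: sum_ennreal sum_nonneg)
  also have "\<dots> \<le> (\<Sum>w\<in>W. \<Sum>\<sigma>\<in>C. ennreal (\<pi> \<sigma> w) * (\<integral>\<^sup>+ u. wasserstein_pow r (P \<sigma>) (Phat (xw w) u) \<partial>U))"
    using G_le loss_meas by (intro sum_mono) (simp add: nn_integral_sum nn_integral_cmult)
  also have "\<dots> = (\<Sum>\<sigma>\<in>C. \<Sum>w\<in>W. ennreal (\<pi> \<sigma> w) * (\<integral>\<^sup>+ u. wasserstein_pow r (P \<sigma>) (Phat (xw w) u) \<partial>U))"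
    by (rule sum.swap)
  also have "\<dots> \<le> (\<Sum>\<sigma>\<in>C. risk n r U Phat (P \<sigma>))"
    unfolding W_def \<pi>_def xw_def P_def using \<epsilon>
    by (intro sum_mono risk_ge_sum_atom_samples[OF E _ inj])
       (auto simp: emeasure_assouad_measure_atom[OF inj] assouad_weight_nonneg assouad_measure_in_borel_prob_measures m)
  finally show ?thesis unfolding C_def W_def \<pi>_def c_def P_def .
qed

lemma sup_risk_ge_assouad:
  fixes x :: "nat \<Rightarrow> 'a::metric_space" and U :: "'u measure"
    and Phat :: "(nat \<Rightarrow> 'a) \<Rightarrow> 'u \<Rightarrow> 'a measure"
  assumes r: "0 < r" and n: "0 < n" and m: "0 < m"
    and \<epsilon>: "0 \<le> \<epsilon>" "\<epsilon> \<le> 1" "\<epsilon>\<^sup>2 = real m / (16 * real n)"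
    and \<delta>: "0 < \<delta>" and sep: "\<And>i j. i < 2 * m \<Longrightarrow> j < 2 * m \<Longrightarrow> i \<noteq> j \<Longrightarrow> \<delta> \<le> dist (x i) (x j)"
    and E: "(U, Phat) \<in> estimators n r"
  shows "ennreal ((\<delta>/2) powr r * (7/64) * \<epsilon>) \<le> (SUP P\<in>borel_prob_measures. risk n r U Phat P)"
proof -
  define S where "S = (SUP P\<in>borel_prob_measures. risk n r U Phat P)"
  define C where "C = PiE {..<m} (\<lambda>_. UNIV :: bool set)"
  define c where "c = (\<delta>/2) powr r"
  have "card C = 2 ^ m" unfolding C_def by (simp add: card_PiE)
  have c0: "0 \<le> c" unfolding c_def by simp
  have "2 ^ m * (c * (7/64) * \<epsilon>) = c * (\<epsilon> / (4 * real m)) * (\<Sum>j<m. \<Sum>\<sigma>\<in>C. 7/16)"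
    using \<open>card C = 2 ^ m\<close> m by (simp add: field_simps)
  also have "\<dots> \<le> c * (\<epsilon> / (4 * real m)) * (\<Sum>j<m. \<Sum>\<sigma>\<in>C. \<Sum>w\<in>PiE {..<n} (\<lambda>_. {..<2 * m}).
      min (\<Prod>t<n. assouad_weight \<epsilon> m \<sigma> (w t)) (\<Prod>t<n. assouad_weight \<epsilon> m (flip_coord j \<sigma>) (w t)))"
    by (intro mult_left_mono sum_mono assouad_sample_overlap[OF m _ \<epsilon>(1,2) n \<epsilon>(3)]) (auto simp: c0 \<epsilon>)
  finally have "ennreal (2 ^ m * (c * (7/64) * \<epsilon>)) \<le> (\<Sum>\<sigma>\<in>C. risk n r U Phat (assouad_measure x \<epsilon> m \<sigma>))"
    using sum_risk_assouad_measure_ge[where x=x, OF r m \<epsilon>(1,2) \<delta> sep E] unfolding C_def c_def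
    by (meson ennreal_leI order_trans)
  also have "\<dots> \<le> (\<Sum>\<sigma>\<in>C. S)"
    unfolding S_def using m \<epsilon> by (intro sum_mono SUP_upper assouad_measure_in_borel_prob_measures) auto
  also have "\<dots> = 2 ^ m * S"
    using \<open>card C = 2 ^ m\<close> by simp
  also have "ennreal (2 ^ m * (c * (7/64) * \<epsilon>)) = 2 ^ m * ennreal (c * (7/64) * \<epsilon>)"
    using c0 \<epsilon> by (subst ennreal_mult) (auto simp: ennreal_power[symmetric])
  finally show ?thesis
    unfolding S_def c_def by (subst (asm) ennreal_mult_le_mult_iff) (auto simp: power_eq_top_ennreal)
qed

lemma packing_radius_gt_obtains_separated:
  assumes "ennreal \<delta> < packing_radius TYPE('a::metric_space) k" "0 \<le> \<delta>"
  obtains x :: "nat \<Rightarrow> 'a::metric_space" where "\<And>i j. i < k \<Longrightarrow> j < k \<Longrightarrow> i \<noteq> j \<Longrightarrow> \<delta> < dist (x i) (x j)"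
proof -
  from assms(1) obtain S :: "'a set" where S: "infinite S \<or> card S \<ge> k" and "ennreal \<delta> < sep S"
    unfolding packing_radius_def by (auto simp: less_SUP_iff)
  obtain T where T: "T \<subseteq> S" "finite T" "card T = k"
  proof (cases "finite S")
    case True
    with S have "k \<le> card S" by simp
    then show ?thesis using obtain_subset_with_card_n that by blast
  qed (use infinite_arbitrarily_large that in blast)
  obtain x where x: "bij_betw x {0..<k} T" using ex_bij_betw_nat_finite[OF T(2)] unfolding T(3) by blast
  show ?thesis
  proof (rule that)
    fix i j assume ij: "i < k" "j < k" "i \<noteq> j"
    then have "x i \<in> S" "x j \<in> S"
      using x T(1) by (auto simp: bij_betw_def)
    moreover have "x i \<noteq> x j"
      using x ij by (auto simp: bij_betw_def inj_on_def)
    ultimately have "sep S \<le> ennreal (dist (x i) (x j))"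
      unfolding sep_def by (intro INF_lower2[of "(x i, x j)"]) auto
    with \<open>ennreal \<delta> < sep S\<close> have "ennreal \<delta> < ennreal (dist (x i) (x j))" by order
    then show "\<delta> < dist (x i) (x j)" using assms(2) by (simp add: ennreal_less_iff)
  qed
qed

lemma ennreal_mult_powr_le_of_below:
  fixes R L :: ennreal
  assumes r: "0 < r" and a: "0 \<le> a"
    and below: "\<And>\<delta>. 0 < \<delta> \<Longrightarrow> ennreal \<delta> < R \<Longrightarrow> ennreal (a * \<delta> powr r) \<le> L"
  shows "ennreal a * ennreal_powr R r \<le> L"
proof (cases L)
  case (real L')
  note L = real
  have below': "a * \<delta> powr r \<le> L'" if "0 < \<delta>" "ennreal \<delta> < R" for \<delta>
    using below[OF that] L a by (simp add: ennreal_le_iff)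
  show ?thesis
  proof (cases R)
    case (real R')
    have "a * R' powr r \<le> L'"
    proof (cases "R' = 0")
      case False
      then have "0 < R'" using real by simp
      have "((\<lambda>\<delta>. a * \<delta> powr r) \<longlongrightarrow> a * R' powr r) (at_left R')"
        using \<open>0 < R'\<close> by (intro tendsto_intros) auto
      moreover have "eventually (\<lambda>\<delta>. a * \<delta> powr r \<le> L') (at_left R')"
        using eventually_at_left_real[OF \<open>0 < R'\<close>]
        by eventually_elim (use real in \<open>auto intro!: below' simp: ennreal_less_iff\<close>)
      ultimately show ?thesis by (rule tendsto_upperbound) simp
    qed (use L in auto)
    then show ?thesis using real L a
      by (simp add: ennreal_powr_def ennreal_mult[symmetric])
  next
    case top
    show ?thesis
    proof (cases "a = 0")
      case False
      define \<delta> where "\<delta> = ((L' + 1) / a) powr (1 / r)"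
      have "0 < a" "0 \<le> L'" using False a L by auto
      then have "\<delta> powr r = (L' + 1) / a" and "0 < \<delta>"
        using r by (simp_all add: \<delta>_def powr_powr)
      then have "a * \<delta> powr r = L' + 1" using False by simp
      with below'[OF \<open>0 < \<delta>\<close>] top show ?thesis by simp
    qed simp
  qed
qed simp

lemma packing_constant_le_assouad_constant:
  assumes \<delta>: "0 < \<delta>" and n: "0 < n" and k: "2 \<le> k" "k \<le> 32 * n"
  shows "3 * ln 2 / 2 powr (r + 12) * sqrt ((real k - 1) / real n) * \<delta> powr r
     \<le> (\<delta>/2) powr r * (7/64) * sqrt (real (k div 2) / (16 * real n))"
proof -
  define \<epsilon> where "\<epsilon> = sqrt (real (k div 2) / (16 * real n))"
  define s where "s = sqrt ((real k - 1) / real n)"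
  have "real k - 1 \<le> 9/4 * real (k div 2)" by linarith
  then have "(real k - 1) / real n \<le> 36 * (real (k div 2) / (16 * real n))"
    using divide_right_mono[of "real k - 1" "9/4 * real (k div 2)" "real n"] by simp
  then have "s \<le> sqrt 36 * \<epsilon>"
    unfolding s_def \<epsilon>_def by (simp only: real_sqrt_mult[symmetric] real_sqrt_le_mono)
  also have "sqrt 36 = (6::real)" by (simp add: real_sqrt_unique)
  finally have "s \<le> 6 * \<epsilon>" .
  moreover have "ln (2::real) \<le> 1" using ln_le_minus_one[of 2] by simp
  ultimately have "3 * ln 2 * s \<le> 3 * 1 * (6 * \<epsilon>)"
    using k by (intro mult_mono) (auto simp: s_def)
  moreover have "0 \<le> \<epsilon>" unfolding \<epsilon>_def by simp
  ultimately have bound: "(3 * ln 2 * s) / 4096 \<le> 7/64 * \<epsilon>"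
    by linarith
  have "2 powr (r + 12) = 2 powr r * 4096" and "(\<delta>/2) powr r = \<delta> powr r / 2 powr r"
    using \<delta> by (simp_all add: powr_add powr_divide)
  then have "3 * ln 2 / 2 powr (r + 12) * s * \<delta> powr r = (\<delta> powr r / 2 powr r) * ((3 * ln 2 * s) / 4096)"
    and "(\<delta>/2) powr r * (7/64) * \<epsilon> = (\<delta> powr r / 2 powr r) * (7/64 * \<epsilon>)"
    by (simp_all add: field_simps)
  moreover have "(\<delta> powr r / 2 powr r) * ((3 * ln 2 * s) / 4096) \<le> (\<delta> powr r / 2 powr r) * (7/64 * \<epsilon>)"
    using bound by (rule mult_left_mono) simp
  ultimately show ?thesis unfolding s_def \<epsilon>_def by simp
qed

lemma sup_risk_ge_packing_term:
  fixes U :: "'u measure" and Phat :: "(nat \<Rightarrow> 'a::metric_space) \<Rightarrow> 'u \<Rightarrow> 'a measure"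
  assumes r: "0 < r" and k: "2 \<le> k" "k \<le> 32 * n" and E: "(U, Phat) \<in> estimators n r"
  shows "ennreal (3 * ln 2 / 2 powr (r + 12)) *
           (ennreal_powr (packing_radius TYPE('a) k) r * ennreal (sqrt ((real k - 1) / real n)))
         \<le> (SUP P\<in>borel_prob_measures. risk n r U Phat P)"
proof -
  define c where "c = 3 * ln 2 / 2 powr (r + 12)"
  define s where "s = sqrt ((real k - 1) / real n)"
  define m where "m = k div 2"
  define \<epsilon> where "\<epsilon> = sqrt (real m / (16 * real n))"
  have n: "0 < n" and m: "0 < m" and "2 * m \<le> k" using k by (auto simp: m_def)
  have "0 \<le> c" "0 \<le> s" using k by (simp_all add: c_def s_def)
  have "real m \<le> 16 * real n"
    using k unfolding m_def by linarith
  then have \<epsilon>: "0 \<le> \<epsilon>" "\<epsilon> \<le> 1" "\<epsilon>\<^sup>2 = real m / (16 * real n)"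
    using n by (simp_all add: \<epsilon>_def)
  have "ennreal (c * s) * ennreal_powr (packing_radius TYPE('a) k) r \<le> (SUP P\<in>borel_prob_measures. risk n r U Phat P)"
  proof (rule ennreal_mult_powr_le_of_below)
    fix \<delta> :: real assume \<delta>: "0 < \<delta>" "ennreal \<delta> < packing_radius TYPE('a) k"
    obtain x :: "nat \<Rightarrow> 'a" where x: "\<And>i j. i < k \<Longrightarrow> j < k \<Longrightarrow> i \<noteq> j \<Longrightarrow> \<delta> < dist (x i) (x j)"
      using packing_radius_gt_obtains_separated[OF \<delta>(2) less_imp_le[OF \<delta>(1)]] by blast
    have sep: "\<delta> \<le> dist (x i) (x j)" if "i < 2 * m" "j < 2 * m" "i \<noteq> j" for i j
      using x[of i j] that \<open>2 * m \<le> k\<close> by simp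
    have "c * s * \<delta> powr r \<le> (\<delta>/2) powr r * (7/64) * \<epsilon>"
      using packing_constant_le_assouad_constant[OF \<delta>(1) n k] by (simp add: c_def s_def \<epsilon>_def m_def)
    then have "ennreal (c * s * \<delta> powr r) \<le> ennreal ((\<delta>/2) powr r * (7/64) * \<epsilon>)"
      by (rule ennreal_leI)
    also have "\<dots> \<le> (SUP P\<in>borel_prob_measures. risk n r U Phat P)"
      using r by (intro sup_risk_ge_assouad[OF _ n m \<epsilon> \<delta>(1) sep E]) auto
    finally show "ennreal (c * s * \<delta> powr r) \<le> (SUP P\<in>borel_prob_measures. risk n r U Phat P)" .
  qed (use r \<open>0 \<le> c\<close> \<open>0 \<le> s\<close> in auto)
  moreover have "ennreal c * (ennreal_powr (packing_radius TYPE('a) k) r * ennreal s)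
      = ennreal (c * s) * ennreal_powr (packing_radius TYPE('a) k) r"
    using \<open>0 \<le> c\<close> \<open>0 \<le> s\<close> by (simp add: ennreal_mult mult_ac)
  ultimately show ?thesis unfolding c_def s_def by (simp only:)
qed

theorem theorem3:
  fixes r :: real and n :: nat
  assumes "r \<ge> 1" and "n \<ge> 1"
  shows "(INF E \<in> (estimators n r :: ('u measure \<times> ((nat \<Rightarrow> 'a::metric_space) \<Rightarrow> 'u \<Rightarrow> 'a measure)) set).
            SUP P \<in> borel_prob_measures. risk n r (fst E) (snd E) P)
         \<ge> ennreal (3 * ln 2 / 2 powr (r + 12)) *
           (SUP k \<in> {2..32 * n}.
              ennreal_powr (packing_radius TYPE('a) k) r * ennreal (sqrt ((real k - 1) / real n)))"
  unfolding SUP_mult_left_ennreal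
proof (intro SUP_least INF_greatest)
  fix k and E :: "'u measure \<times> ((nat \<Rightarrow> 'a) \<Rightarrow> 'u \<Rightarrow> 'a measure)"
  assume "k \<in> {2..32 * n}" "E \<in> estimators n r"
  then show "ennreal (3 * ln 2 / 2 powr (r + 12)) *
      (ennreal_powr (packing_radius TYPE('a) k) r * ennreal (sqrt ((real k - 1) / real n)))
    \<le> (SUP P\<in>borel_prob_measures. risk n r (fst E) (snd E) P)"
    using sup_risk_ge_packing_term[of r k n "fst E" "snd E"] assms by simp
qed

end
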